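(* Under the standing assumptions below, let $U\subset G$ be a finite subset contained in an elliptic subgroup of $G$. Then $E(U)\leqslant10\delta$. If, in addition, $|U|\geqslant11N_0$, then $\lambda_0(U)\leqslant2\kappa_0+12\delta$.
   Context: Standing assumptions: $X$ is a geodesic $\delta$--hyperbolic space (distance $|x-y|$, Gromov product $(p,q)_x=\frac12(|p-x|+|q-x|-|p-q|)$, $(p,r)_x\geqslant\min\{(p,q)_x,(q,r)_x\}-\delta$); $N_0\geqslant1$; either $\delta>0$ and $\kappa_0\geqslant\delta$, or $\delta=0$, $X$ a simplicial tree with edges of length $\rho_0$ and $\kappa_0\geqslant\rho_0$. $G$ acts by isometries, $(\kappa_0,N_0)$--acylindrically: for all $x,y$ with $|x-y|\geqslant\kappa_0$ at most $N_0$ elements $g$ satisfy $|gx-x|\leqslant100\delta$, $|gy-y|\leqslant100\delta$. An elliptic subgroup is a subgroup with bounded orbits in $X$. For finite $U\subset G$, $E(U):=\inf_{x\in X}\frac1{|U|}\sum_{u\in U}|ux-x|$; a point $x_0\in X$ is fixed with $\frac1{|U|}\sum_{u\in U}|ux_0-x_0|\leqslant E(U)+\delta$, and $\lambda_0(U):=\max_{u\in U}|ux_0-x_0|$. *)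

theory Defs
  imports "HOL-Analysis.Analysis" "HOL-Algebra.Group"
begin

text \<open>The space X is the whole (metric) type 'a, with distance dist.\<close>

definition gromov_product :: "'a::metric_space \<Rightarrow> 'a \<Rightarrow> 'a \<Rightarrow> real" where
  "gromov_product p q x = (dist p x + dist q x - dist p q) / 2"

definition geodesic_space :: "'a::metric_space itself \<Rightarrow> bool" where
  "geodesic_space TYPE('a) \<longleftrightarrow>
     (\<forall>x y::'a. \<exists>\<gamma>::real \<Rightarrow> 'a. \<gamma> 0 = x \<and> \<gamma> (dist x y) = y \<and>
        (\<forall>s\<in>{0..dist x y}. \<forall>t\<in>{0..dist x y}. dist (\<gamma> s) (\<gamma> t) = \<bar>s - t\<bar>))"

definition gromov_hyperbolic :: "'a::metric_space itself \<Rightarrow> real \<Rightarrow> bool" where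
  "gromov_hyperbolic TYPE('a) \<delta> \<longleftrightarrow>
     (\<forall>p q r x::'a. gromov_product p r x \<ge>
        min (gromov_product p q x) (gromov_product q r x) - \<delta>)"

text \<open>Geodesic segment between v and w (unique in a 0-hyperbolic geodesic space).\<close>
definition seg :: "'a::metric_space \<Rightarrow> 'a \<Rightarrow> 'a set" where
  "seg v w = {x. dist v x + dist x w = dist v w}"

text \<open>The (geodesic, 0-hyperbolic) space is the metric realisation of a simplicial tree
  all of whose edges have length rho: there is a vertex set V, distinct vertices are at
  distance at least rho, every point lies on an edge (a segment between two vertices at
  distance exactly rho), and two distinct edges meet only in vertices.\<close>
definition simplicial_tree :: "'a::metric_space itself \<Rightarrow> real \<Rightarrow> bool" where
  "simplicial_tree TYPE('a) \<rho> \<longleftrightarrow> \<rho> > 0 \<and> geodesic_space TYPE('a) \<and> gromov_hyperbolic TYPE('a) 0 \<and>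
     (\<exists>V::'a set.
        (\<forall>v\<in>V. \<forall>w\<in>V. v \<noteq> w \<longrightarrow> dist v w \<ge> \<rho>) \<and>
        (\<forall>x. \<exists>v\<in>V. \<exists>w\<in>V. dist v w = \<rho> \<and> x \<in> seg v w) \<and>
        (\<forall>v\<in>V. \<forall>w\<in>V. \<forall>v'\<in>V. \<forall>w'\<in>V. dist v w = \<rho> \<longrightarrow> dist v' w' = \<rho> \<longrightarrow>
            {v, w} \<noteq> {v', w'} \<longrightarrow> seg v w \<inter> seg v' w' \<subseteq> V))"

definition isometric_action :: "('g, 'b) monoid_scheme \<Rightarrow> ('g \<Rightarrow> 'a::metric_space \<Rightarrow> 'a) \<Rightarrow> bool" where
  "isometric_action G act \<longleftrightarrow> group G \<and>
     (\<forall>x. act \<one>\<^bsub>G\<^esub> x = x) \<and>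
     (\<forall>g\<in>carrier G. \<forall>h\<in>carrier G. \<forall>x. act (g \<otimes>\<^bsub>G\<^esub> h) x = act g (act h x)) \<and>
     (\<forall>g\<in>carrier G. \<forall>x y. dist (act g x) (act g y) = dist x y)"

definition acylindrical :: "('g, 'b) monoid_scheme \<Rightarrow> ('g \<Rightarrow> 'a::metric_space \<Rightarrow> 'a) \<Rightarrow>
    real \<Rightarrow> real \<Rightarrow> nat \<Rightarrow> bool" where
  "acylindrical G act \<delta> \<kappa> N \<longleftrightarrow>
     (\<forall>x y. dist x y \<ge> \<kappa> \<longrightarrow>
        finite {g \<in> carrier G. dist (act g x) x \<le> 100 * \<delta> \<and> dist (act g y) y \<le> 100 * \<delta>} \<and>
        card {g \<in> carrier G. dist (act g x) x \<le> 100 * \<delta> \<and> dist (act g y) y \<le> 100 * \<delta>} \<le> N)"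

definition elliptic_subgroup :: "('g, 'b) monoid_scheme \<Rightarrow> ('g \<Rightarrow> 'a::metric_space \<Rightarrow> 'a) \<Rightarrow> 'g set \<Rightarrow> bool" where
  "elliptic_subgroup G act H \<longleftrightarrow> subgroup H G \<and> (\<forall>x. bounded ((\<lambda>h. act h x) ` H))"

definition avg_disp :: "('g \<Rightarrow> 'a::metric_space \<Rightarrow> 'a) \<Rightarrow> 'g set \<Rightarrow> 'a \<Rightarrow> real" where
  "avg_disp act U x = (\<Sum>u\<in>U. dist (act u x) x) / real (card U)"

definition energy :: "('g \<Rightarrow> 'a::metric_space \<Rightarrow> 'a) \<Rightarrow> 'g set \<Rightarrow> real" where
  "energy act U = (INF x. avg_disp act U x)"

text \<open>lambda_0(U) computed at a point x0.\<close>
definition max_disp :: "('g \<Rightarrow> 'a::metric_space \<Rightarrow> 'a) \<Rightarrow> 'g set \<Rightarrow> 'a \<Rightarrow> real" where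
  "max_disp act U x0 = Max ((\<lambda>u. dist (act u x0) x0) ` U)"

end

theory Submission
  imports Defs
begin

text \<open>Let c be an almost Chebyshev centre of an orbit of H (a point nearly minimising the
  largest distance to the orbit). Since H permutes the orbit, every h in H maps c to another
  almost centre, and in a \<delta>-hyperbolic geodesic space two almost centres are (4\<delta> + \<epsilon>)-close:
  the midpoint of a geodesic between them would otherwise be a strictly better centre. Hence H
  has a point moved by at most 4\<delta> + \<epsilon>, which bounds the energy of U. For the second claim, a
  point x0 of nearly minimal energy moves all but at most |U|/20 elements of U by at most 100\<delta>
  (Markov's inequality); if x0 were \<kappa>0-far from the almost fixed point c, acylindricity would
  allow only N0 \<le> |U|/11 of them. So x0 is \<kappa>0-close to c, and every element of U moves x0 by
  at most 2\<kappa>0 + 6\<delta>. In a tree (\<delta> = 0) the energy vanishes and U fixes x0.\<close>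

lemma gromov_hyperbolic_nonneg:
  assumes "gromov_hyperbolic TYPE('a::metric_space) \<delta>"
  shows "\<delta> \<ge> 0"
proof -
  fix x :: 'a
  have "gromov_product x x x \<ge> min (gromov_product x x x) (gromov_product x x x) - \<delta>"
    using assms unfolding gromov_hyperbolic_def by blast
  then show ?thesis by simp
qed

lemma geodesic_space_midpoint:
  fixes c1 c2 :: "'a::metric_space"
  assumes "geodesic_space TYPE('a)"
  obtains m where "dist c1 m = dist c1 c2 / 2" and "dist c2 m = dist c1 c2 / 2"
proof -
  let ?D = "dist c1 c2"
  obtain \<gamma> :: "real \<Rightarrow> 'a" where "\<gamma> 0 = c1" "\<gamma> ?D = c2"
    and geo: "\<forall>s\<in>{0..?D}. \<forall>t\<in>{0..?D}. dist (\<gamma> s) (\<gamma> t) = \<bar>s - t\<bar>"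
    using assms unfolding geodesic_space_def by blast
  moreover have "dist (\<gamma> 0) (\<gamma> (?D/2)) = ?D/2" "dist (\<gamma> ?D) (\<gamma> (?D/2)) = ?D/2"
    using geo by simp_all
  ultimately have "dist c1 (\<gamma> (?D/2)) = ?D/2" "dist c2 (\<gamma> (?D/2)) = ?D/2"
    by simp_all
  then show ?thesis by (rule that)
qed

lemma gromov_hyperbolic_midpoint_dist_le:
  fixes c1 c2 m y :: "'a::metric_space"
  assumes "gromov_hyperbolic TYPE('a) \<delta>"
    and "dist c1 m = dist c1 c2 / 2" and "dist c2 m = dist c1 c2 / 2"
  shows "dist y m \<le> max (dist c1 y) (dist c2 y) - dist c1 c2 / 2 + 2 * \<delta>"
proof -
  have "gromov_product c1 c2 m \<ge> min (gromov_product c1 y m) (gromov_product y c2 m) - \<delta>"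
    using assms(1) unfolding gromov_hyperbolic_def by blast
  moreover have "gromov_product c1 c2 m = 0"
    using assms(2,3) unfolding gromov_product_def by simp
  ultimately have "gromov_product c1 y m \<le> \<delta> \<or> gromov_product y c2 m \<le> \<delta>"
    by linarith
  then show ?thesis
    using assms(2,3) dist_commute[of y c2] unfolding gromov_product_def by auto
qed

definition sup_dist :: "'a::metric_space set \<Rightarrow> 'a \<Rightarrow> real" where
  "sup_dist Y x = (SUP y\<in>Y. dist x y)"

definition chebyshev_radius :: "'a::metric_space set \<Rightarrow> real" where
  "chebyshev_radius Y = (INF x. sup_dist Y x)"

lemma dist_le_sup_dist:
  assumes "bounded Y" and "y \<in> Y"
  shows "dist x y \<le> sup_dist Y x"
proof -
  obtain e where "\<forall>y\<in>Y. dist x y \<le> e"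
    using assms(1) bounded_any_center by blast
  then have "bdd_above ((\<lambda>y. dist x y) ` Y)"
    by (auto intro: bdd_aboveI2)
  then show ?thesis
    unfolding sup_dist_def using assms(2) by (rule cSUP_upper[rotated])
qed

lemma sup_dist_le:
  assumes "Y \<noteq> {}" and "\<And>y. y \<in> Y \<Longrightarrow> dist x y \<le> B"
  shows "sup_dist Y x \<le> B"
  unfolding sup_dist_def using assms by (rule cSUP_least)

lemma chebyshev_radius_le_sup_dist:
  assumes "bounded Y" and "Y \<noteq> {}"
  shows "chebyshev_radius Y \<le> sup_dist Y x"
proof -
  have "0 \<le> sup_dist Y z" for z
    using assms dist_le_sup_dist[OF assms(1)] by (meson ex_in_conv order_trans zero_le_dist)
  then show ?thesis
    unfolding chebyshev_radius_def by (auto intro!: cINF_lower bdd_belowI2)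
qed

lemma exists_sup_dist_less_chebyshev_radius:
  assumes "e > 0"
  obtains c where "sup_dist Y c < chebyshev_radius Y + e"
proof -
  have "Inf (range (sup_dist Y)) < chebyshev_radius Y + e"
    using assms unfolding chebyshev_radius_def by simp
  then show ?thesis
    using cInf_lessD[of "range (sup_dist Y)"] that by blast
qed

lemma gromov_hyperbolic_dist_centres_le:
  fixes c1 c2 :: "'a::metric_space"
  assumes "geodesic_space TYPE('a)" and "gromov_hyperbolic TYPE('a) \<delta>"
    and "bounded Y" and "Y \<noteq> {}"
    and "sup_dist Y c1 \<le> R" and "sup_dist Y c2 \<le> R"
  shows "dist c1 c2 \<le> 2 * (R - chebyshev_radius Y) + 4 * \<delta>"
proof -
  obtain m where m1: "dist c1 m = dist c1 c2 / 2" and m2: "dist c2 m = dist c1 c2 / 2"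
    using geodesic_space_midpoint[OF assms(1)] by blast
  have "sup_dist Y m \<le> R - dist c1 c2 / 2 + 2 * \<delta>"
  proof (rule sup_dist_le[OF assms(4)])
    fix y assume "y \<in> Y"
    then have "dist c1 y \<le> R" "dist c2 y \<le> R"
      using assms(3,5,6) dist_le_sup_dist order_trans by blast+
    then show "dist m y \<le> R - dist c1 c2 / 2 + 2 * \<delta>"
      using gromov_hyperbolic_midpoint_dist_le[OF assms(2) m1 m2, of y]
      by (simp add: dist_commute)
  qed
  then show ?thesis
    using chebyshev_radius_le_sup_dist[OF assms(3,4), of m] by argo
qed

lemma isometric_action_orbit_invariant:
  fixes G (structure)
  assumes act: "isometric_action G act" and H: "subgroup H G" and "h \<in> H"
  shows "act h ` ((\<lambda>k. act k z) ` H) = (\<lambda>k. act k z) ` H"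
proof -
  interpret group G using act unfolding isometric_action_def by blast
  have mult: "act (g \<otimes> k) z = act g (act k z)" if "g \<in> H" "k \<in> H" for g k
    using act that subgroup.subset[OF H] unfolding isometric_action_def by blast
  have undo: "act k z = act h (act (inv h \<otimes> k) z)" if "k \<in> H" for k
  proof -
    have "h \<otimes> (inv h \<otimes> k) = k"
      using \<open>h \<in> H\<close> that subgroup.subset[OF H] by (simp add: subsetD m_assoc[symmetric])
    then show ?thesis
      using mult[of h "inv h \<otimes> k"] \<open>h \<in> H\<close> that
      by (simp add: subgroup.m_closed[OF H] subgroup.m_inv_closed[OF H])
  qed
  show ?thesis
  proof (intro equalityI subsetI)
    fix y assume "y \<in> act h ` (\<lambda>k. act k z) ` H"
    then obtain k where "k \<in> H" "y = act h (act k z)" by blast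
    then show "y \<in> (\<lambda>k. act k z) ` H"
      using mult \<open>h \<in> H\<close> subgroup.m_closed[OF H] by (metis image_eqI)
  next
    fix y assume "y \<in> (\<lambda>k. act k z) ` H"
    then obtain k where "k \<in> H" "y = act k z" by blast
    then show "y \<in> act h ` (\<lambda>k. act k z) ` H"
      using undo \<open>h \<in> H\<close> subgroup.m_closed[OF H] subgroup.m_inv_closed[OF H] by blast
  qed
qed

lemma sup_dist_orbit_act:
  assumes act: "isometric_action G act" and H: "subgroup H G" and "h \<in> H"
  shows "sup_dist ((\<lambda>k. act k z) ` H) (act h x) = sup_dist ((\<lambda>k. act k z) ` H) x"
proof -
  let ?Y = "(\<lambda>k. act k z) ` H"
  have iso: "dist (act h x) (act h y) = dist x y" for y
    using act subgroup.subset[OF H] \<open>h \<in> H\<close> unfolding isometric_action_def by blast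
  have "sup_dist ?Y (act h x) = (SUP y\<in>act h ` ?Y. dist (act h x) y)"
    unfolding sup_dist_def isometric_action_orbit_invariant[OF assms] ..
  also have "\<dots> = sup_dist ?Y x"
    unfolding sup_dist_def image_image iso ..
  finally show ?thesis .
qed

lemma elliptic_subgroup_almost_fixed_point:
  fixes act :: "'g \<Rightarrow> 'a::metric_space \<Rightarrow> 'a"
  assumes "geodesic_space TYPE('a)" and "gromov_hyperbolic TYPE('a) \<delta>"
    and act: "isometric_action G act" and ell: "elliptic_subgroup G act H" and "e > 0"
  obtains c where "\<And>h. h \<in> H \<Longrightarrow> dist (act h c) c \<le> 4 * \<delta> + e"
proof -
  fix z :: 'a
  let ?Y = "(\<lambda>k. act k z) ` H"
  have H: "subgroup H G" and bounded: "bounded ?Y"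
    using ell unfolding elliptic_subgroup_def by auto
  have nonempty: "?Y \<noteq> {}"
    using subgroup.one_closed[OF H] by blast
  obtain c where c: "sup_dist ?Y c < chebyshev_radius ?Y + e / 2"
    using exists_sup_dist_less_chebyshev_radius \<open>e > 0\<close> half_gt_zero by blast
  have "dist (act h c) c \<le> 4 * \<delta> + e" if "h \<in> H" for h
    using gromov_hyperbolic_dist_centres_le[OF assms(1,2) bounded nonempty, of "act h c" _ c] c
      sup_dist_orbit_act[OF act H that]
    by fastforce
  then show ?thesis by (rule that)
qed

lemma isometric_action_displacement_le:
  assumes "isometric_action G act" and "g \<in> carrier G"
  shows "dist (act g x) x \<le> dist (act g c) c + 2 * dist x c"
proof -
  have "dist (act g x) (act g c) = dist x c"
    using assms unfolding isometric_action_def by blast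
  then show ?thesis
    using dist_triangle[of "act g x" x "act g c"] dist_triangle[of "act g c" x c]
    by (simp add: dist_commute)
qed

lemma avg_disp_nonneg: "0 \<le> avg_disp act U x"
  unfolding avg_disp_def by (simp add: sum_nonneg)

lemma energy_le_avg_disp: "energy act U \<le> avg_disp act U x"
  unfolding energy_def using avg_disp_nonneg by (auto intro!: cINF_lower bdd_belowI2)

lemma avg_disp_le:
  assumes "\<And>u. u \<in> U \<Longrightarrow> dist (act u x) x \<le> B" and "0 \<le> B"
  shows "avg_disp act U x \<le> B"
proof -
  have "(\<Sum>u\<in>U. dist (act u x) x) \<le> real (card U) * B"
    using sum_mono[of U _ "\<lambda>_. B"] assms(1) by simp
  then show ?thesis
    unfolding avg_disp_def using assms(2)
    by (cases "card U = 0") (auto simp: divide_le_eq mult.commute)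
qed

lemma sum_disp_eq_card_mult_avg_disp:
  assumes "finite U" "U \<noteq> {}"
  shows "(\<Sum>u\<in>U. dist (act u x) x) = real (card U) * avg_disp act U x"
  unfolding avg_disp_def using assms by simp

lemma avg_disp_eq_0_iff:
  assumes "finite U"
  shows "avg_disp act U x = 0 \<longleftrightarrow> (\<forall>u\<in>U. act u x = x)"
  unfolding avg_disp_def using assms by (auto simp: sum_nonneg_eq_0_iff)

lemma max_disp_le:
  assumes "finite U" "U \<noteq> {}" and "\<And>u. u \<in> U \<Longrightarrow> dist (act u x) x \<le> B"
  shows "max_disp act U x \<le> B"
  unfolding max_disp_def using assms by simp

lemma energy_le_of_elliptic:
  fixes act :: "'g \<Rightarrow> 'a::metric_space \<Rightarrow> 'a"
  assumes "geodesic_space TYPE('a)" and hyp: "gromov_hyperbolic TYPE('a) \<delta>"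
    and "isometric_action G act" and "elliptic_subgroup G act H" and "U \<subseteq> H"
  shows "energy act U \<le> 4 * \<delta>"
proof (rule field_le_epsilon)
  fix e :: real assume "e > 0"
  then obtain c where "\<And>h. h \<in> H \<Longrightarrow> dist (act h c) c \<le> 4 * \<delta> + e"
    using elliptic_subgroup_almost_fixed_point[OF assms(1-4)] by blast
  then have "avg_disp act U c \<le> 4 * \<delta> + e"
    using assms(5) gromov_hyperbolic_nonneg[OF hyp] \<open>e > 0\<close> by (intro avg_disp_le) auto
  then show "energy act U \<le> 4 * \<delta> + e"
    using energy_le_avg_disp[of act U c] by linarith
qed

lemma card_gt_mult_le_sum:
  fixes f :: "'i \<Rightarrow> real"
  assumes "finite U" and "\<And>u. u \<in> U \<Longrightarrow> 0 \<le> f u"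
  shows "real (card {u\<in>U. t < f u}) * t \<le> (\<Sum>u\<in>U. f u)"
proof -
  have "real (card {u\<in>U. t < f u}) * t \<le> (\<Sum>u\<in>{u\<in>U. t < f u}. f u)"
    using sum_mono[of "{u\<in>U. t < f u}" "\<lambda>_. t" f] by simp
  also have "\<dots> \<le> (\<Sum>u\<in>U. f u)"
    using assms by (intro sum_mono2) auto
  finally show ?thesis .
qed

lemma acylindrical_low_energy_point_near:
  assumes acyl: "acylindrical G act \<delta> \<kappa> N" and "\<delta> > 0"
    and U: "finite U" "U \<noteq> {}" "U \<subseteq> carrier G" "11 * N \<le> card U"
    and avg: "avg_disp act U x \<le> 5 * \<delta>"
    and c: "\<And>u. u \<in> U \<Longrightarrow> dist (act u c) c \<le> 100 * \<delta>"
  shows "dist x c < \<kappa>"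
proof (rule ccontr)
  define S where "S = {g \<in> carrier G. dist (act g x) x \<le> 100 * \<delta> \<and> dist (act g c) c \<le> 100 * \<delta>}"
  define good where "good = {u \<in> U. dist (act u x) x \<le> 100 * \<delta>}"
  define bad where "bad = {u \<in> U. 100 * \<delta> < dist (act u x) x}"
  assume "\<not> dist x c < \<kappa>"
  then have "finite S" "card S \<le> N"
    using acyl unfolding acylindrical_def S_def by auto
  moreover have "good \<subseteq> S"
    using U(3) c unfolding good_def S_def by auto
  ultimately have card_good: "card good \<le> N"
    using card_mono le_trans by blast
  have "real (card bad) * (100 * \<delta>) \<le> (\<Sum>u\<in>U. dist (act u x) x)"
    unfolding bad_def by (rule card_gt_mult_le_sum[OF U(1)]) simp
  also have "\<dots> \<le> real (card U) * (5 * \<delta>)"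
    unfolding sum_disp_eq_card_mult_avg_disp[OF U(1,2)] using avg by (simp add: mult_left_mono)
  finally have card_bad: "20 * real (card bad) \<le> real (card U)"
    using \<open>\<delta> > 0\<close> by (simp add: algebra_simps)
  have "U = good \<union> bad" "good \<inter> bad = {}"
    unfolding good_def bad_def by auto
  then have "card U = card good + card bad"
    using U(1) card_Un_disjoint[of good bad] by (metis finite_Un)
  then show False
    using card_good card_bad U(2,4) card_gt_0_iff[of U] U(1) by linarith
qed

theorem proposition4p4:
  fixes G :: "('g, 'b) monoid_scheme"
    and act :: "'g \<Rightarrow> 'a::metric_space \<Rightarrow> 'a"
    and \<delta> \<kappa>0 \<rho>0 :: real and N0 :: nat
    and U H :: "'g set"
  assumes geod: "geodesic_space TYPE('a)"
    and hyp: "gromov_hyperbolic TYPE('a) \<delta>"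
    and N0: "N0 \<ge> 1"
    and params: "(\<delta> > 0 \<and> \<kappa>0 \<ge> \<delta>) \<or>
                 (\<delta> = 0 \<and> simplicial_tree TYPE('a) \<rho>0 \<and> \<kappa>0 \<ge> \<rho>0)"
    and act: "isometric_action G act"
    and acyl: "acylindrical G act \<delta> \<kappa>0 N0"
    and ell: "elliptic_subgroup G act H"
    and U: "finite U" "U \<subseteq> H"
  shows "energy act U \<le> 10 * \<delta> \<and>
         (card U \<ge> 11 * N0 \<longrightarrow>
            (\<forall>x0. avg_disp act U x0 \<le> energy act U + \<delta> \<longrightarrow>
                  max_disp act U x0 \<le> 2 * \<kappa>0 + 12 * \<delta>))"
proof -
  have energy: "energy act U \<le> 4 * \<delta>"
    using energy_le_of_elliptic[OF geod hyp act ell U(2)] .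
  have "max_disp act U x0 \<le> 2 * \<kappa>0 + 12 * \<delta>"
    if card: "card U \<ge> 11 * N0" and x0: "avg_disp act U x0 \<le> energy act U + \<delta>" for x0
  proof -
    have "U \<noteq> {}" using card N0 by auto
    have avg: "avg_disp act U x0 \<le> 5 * \<delta>" using x0 energy by linarith
    show ?thesis
    proof (cases "\<delta> > 0")
      case True
      obtain c where c: "\<And>h. h \<in> H \<Longrightarrow> dist (act h c) c \<le> 4 * \<delta> + 2 * \<delta>"
        using elliptic_subgroup_almost_fixed_point[OF geod hyp act ell, of "2 * \<delta>"] True by auto
      have UG: "U \<subseteq> carrier G"
        using U(2) ell subgroup.subset unfolding elliptic_subgroup_def by blast
      have near: "dist x0 c < \<kappa>0"
        using acylindrical_low_energy_point_near[OF acyl True U(1) \<open>U \<noteq> {}\<close> UG card avg]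
          c U(2) True by force
      have "dist (act u x0) x0 \<le> 2 * \<kappa>0 + 12 * \<delta>" if "u \<in> U" for u
        using isometric_action_displacement_le[OF act, of u x0 c] c[of u] near that U(2) UG True
        by (auto simp: subset_iff)
      then show ?thesis
        using max_disp_le[OF U(1) \<open>U \<noteq> {}\<close>] by blast
    next
      case False
      then have "\<delta> = 0" and "\<kappa>0 > 0"
        using params unfolding simplicial_tree_def by auto
      then have "\<forall>u\<in>U. act u x0 = x0"
        using avg avg_disp_nonneg[of act U x0] avg_disp_eq_0_iff[OF U(1)] by auto
      then show ?thesis
        using \<open>\<delta> = 0\<close> \<open>\<kappa>0 > 0\<close> by (intro max_disp_le[OF U(1) \<open>U \<noteq> {}\<close>]) auto
    qed
  qed
  then show ?thesis
    using energy gromov_hyperbolic_nonneg[OF hyp] by auto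
qed

end
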